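(* Let $G$ be a graph, $H$ a hole of $G$, $P$ an induced path of $G$, and $u,v$ two nonadjacent vertices of $H$ not on $P$, such that (i) $v$ is adjacent to no vertex of $P$, and (ii) some internal vertex of one of the two $(u,v)$-sections of $H$ and some internal vertex of the other $(u,v)$-section of $H$ are each adjacent to a vertex of $P$. Then $G$ has a hole which does not contain $u$, contains both edges of $H$ incident to $v$, and contains a vertex of $P$ not lying on $H$.
   Context: All graphs are finite and simple. A hole of a graph is an induced cycle of length at least $4$. For two vertices $u,v$ of a cycle $H$, the two $(u,v)$-sections of $H$ are the two $u$–$v$ paths into which $H$ is divided by $u$ and $v$. *)

theory Defs
  imports Main
begin

definition graph :: "'a set \<Rightarrow> ('a \<Rightarrow> 'a \<Rightarrow> bool) \<Rightarrow> bool" where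
  "graph V E \<longleftrightarrow> finite V \<and> (\<forall>x y. E x y \<longrightarrow> E y x)
     \<and> (\<forall>x. \<not> E x x) \<and> (\<forall>x y. E x y \<longrightarrow> x \<in> V \<and> y \<in> V)"

definition induced_path :: "'a set \<Rightarrow> ('a \<Rightarrow> 'a \<Rightarrow> bool) \<Rightarrow> 'a list \<Rightarrow> bool" where
  "induced_path V E P \<longleftrightarrow> P \<noteq> [] \<and> distinct P \<and> set P \<subseteq> V
     \<and> (\<forall>i j. i < length P \<and> j < length P \<longrightarrow>
            (E (P ! i) (P ! j) \<longleftrightarrow> (i + 1 = j \<or> j + 1 = i)))"

definition hole :: "'a set \<Rightarrow> ('a \<Rightarrow> 'a \<Rightarrow> bool) \<Rightarrow> 'a list \<Rightarrow> bool" where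
  "hole V E H \<longleftrightarrow> length H \<ge> 4 \<and> distinct H \<and> set H \<subseteq> V
     \<and> (\<forall>i j. i < length H \<and> j < length H \<longrightarrow>
            (E (H ! i) (H ! j) \<longleftrightarrow>
               (j = (i + 1) mod length H \<or> i = (j + 1) mod length H)))"

definition cycle_edges :: "'a list \<Rightarrow> 'a set set" where
  "cycle_edges C = {{C ! i, C ! ((i + 1) mod length C)} | i. i < length C}"

definition cyc_seg :: "'a list \<Rightarrow> nat \<Rightarrow> nat \<Rightarrow> 'a list" where
  "cyc_seg H i d = map (\<lambda>k. H ! ((i + k) mod length H)) [0..<Suc d]"

text \<open>S is one of the two (u,v)-sections of the cycle H (as a u--v or v--u path).\<close>
definition is_section :: "'a list \<Rightarrow> 'a \<Rightarrow> 'a \<Rightarrow> 'a list \<Rightarrow> bool" where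
  "is_section H u v S \<longleftrightarrow> (\<exists>i j. i < length H \<and> j < length H \<and> H ! i = u \<and> H ! j = v \<and>
      (S = cyc_seg H i ((j + length H - i) mod length H)
       \<or> S = cyc_seg H j ((i + length H - j) mod length H)))"

definition internal :: "'a list \<Rightarrow> 'a set" where
  "internal S = set (butlast (tl S))"

end

theory Submission
  imports Defs
begin

text \<open>Rotate \<open>H\<close> so that it reads \<open>v, X, u, Y\<close>; the neighbours of \<open>v\<close> on \<open>H\<close> are then
  \<open>hd X\<close> and \<open>last Y\<close>. Inside the subgraph induced by \<open>X \<union> Y \<union> P\<close> these two vertices are
  connected: along \<open>X\<close> to a vertex with a neighbour on \<open>P\<close>, through \<open>P\<close>, and back along \<open>Y\<close>.
  A shortest such connection \<open>R\<close> is an induced path, and \<open>v\<close> sees only its two ends because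
  \<open>v\<close> has no neighbour on \<open>P\<close>; so \<open>v # R\<close> is a hole avoiding \<open>u\<close> and containing both edges
  of \<open>H\<close> at \<open>v\<close>. Since \<open>H\<close> has no edge between \<open>X\<close> and \<open>Y\<close>, the path \<open>R\<close> cannot stay
  inside \<open>X \<union> Y\<close>, hence it uses a vertex of \<open>P\<close> off \<open>H\<close>.\<close>

section \<open>Rotations of cyclic lists\<close>

lemma mod_add_succ_iff:
  assumes "i < (n::nat)" "j < n"
  shows "(k + j) mod n = ((k + i) mod n + 1) mod n \<longleftrightarrow> j = (i + 1) mod n"
proof -
  have "((k + i) mod n + 1) mod n = (k + (i + 1)) mod n"
    by (metis mod_add_left_eq add.assoc)
  moreover have "(k + j) mod n = (k + (i + 1)) mod n \<longleftrightarrow> j mod n = (i + 1) mod n"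
    using nat_mod_eq_iff by force
  ultimately show ?thesis
    using assms by simp
qed

lemma hole_rotate:
  assumes "hole V E H"
  shows "hole V E (rotate k H)"
proof -
  let ?n = "length H"
  have adj: "\<And>i j. i < ?n \<Longrightarrow> j < ?n \<Longrightarrow>
      E (H ! i) (H ! j) \<longleftrightarrow> j = (i + 1) mod ?n \<or> i = (j + 1) mod ?n"
    using assms by (simp add: hole_def)
  have adj_rot: "E (rotate k H ! i) (rotate k H ! j) \<longleftrightarrow>
      j = (i + 1) mod ?n \<or> i = (j + 1) mod ?n" if "i < ?n" "j < ?n" for i j
  proof -
    have "0 < ?n" using that by linarith
    then have "(k + i) mod ?n < ?n" "(k + j) mod ?n < ?n" by simp_all
    then have "E (H ! ((k + i) mod ?n)) (H ! ((k + j) mod ?n)) \<longleftrightarrow>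
        (k + j) mod ?n = ((k + i) mod ?n + 1) mod ?n \<or> (k + i) mod ?n = ((k + j) mod ?n + 1) mod ?n"
      by (rule adj)
    then show ?thesis
      using that mod_add_succ_iff[OF that] mod_add_succ_iff[OF that(2,1)] by (simp add: nth_rotate)
  qed
  moreover have "length H \<ge> 4" "distinct H" "set H \<subseteq> V"
    using assms by (simp_all add: hole_def)
  ultimately show ?thesis
    unfolding hole_def length_rotate distinct_rotate set_rotate by blast
qed

lemma cycle_edges_rotate_subset: "cycle_edges (rotate k C) \<subseteq> cycle_edges C"
proof
  fix e assume "e \<in> cycle_edges (rotate k C)"
  then obtain i where i: "i < length C"
    and "e = {rotate k C ! i, rotate k C ! ((i + 1) mod length C)}"
    unfolding cycle_edges_def by auto
  moreover have n: "0 < length C" using i by linarith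
  moreover have "(i + 1) mod length C < length C" using n by simp
  ultimately have e: "e = {C ! ((k + i) mod length C), C ! ((k + (i + 1) mod length C) mod length C)}"
    using nth_rotate[of i C k] nth_rotate[of "(i + 1) mod length C" C k] by simp
  define m where "m = (k + i) mod length C"
  have "(k + (i + 1) mod length C) mod length C = (m + 1) mod length C"
    unfolding m_def mod_add_right_eq mod_add_left_eq by (simp only: add.assoc)
  then have "e = {C ! m, C ! ((m + 1) mod length C)}" using e by (simp add: m_def)
  moreover have "m < length C" using n by (simp add: m_def)
  ultimately show "e \<in> cycle_edges C"
    unfolding cycle_edges_def by blast
qed

lemma rotate_to_front:
  assumes "v \<in> set H"
  obtains ws k l where "rotate k H = v # ws" and "rotate l (v # ws) = H"
proof -
  obtain xs ys where "H = xs @ v # ys" using split_list assms by fast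
  then have "rotate (length xs) H = v # ys @ xs" and "rotate (length (v # ys)) (v # ys @ xs) = H"
    using rotate_append[of xs] rotate_append[of "v # ys" xs] by simp_all
  then show thesis using that by blast
qed

lemma rotate_eq_if_hd_eq:
  assumes "distinct H" "H \<noteq> []" "hd (rotate i H) = hd (rotate k H)"
  shows "rotate i H = rotate k H"
proof -
  have "H ! (i mod length H) = H ! (k mod length H)"
    using assms by (simp add: hd_rotate_conv_nth)
  then have "i mod length H = k mod length H"
    using assms by (simp add: nth_eq_iff_index_eq)
  then show ?thesis by (metis rotate_conv_mod)
qed

lemma cyc_seg_eq_take_rotate:
  assumes "d < length H"
  shows "cyc_seg H i d = take (Suc d) (rotate i H)"
  using assms by (intro nth_equalityI) (auto simp: cyc_seg_def nth_rotate simp del: upt_Suc)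

lemma cyc_seg_between:
  assumes "distinct H" "i < length H" "j < length H" "H ! j = b"
    and rot: "rotate i H = a # Z @ b # Z'"
  shows "cyc_seg H i ((j + length H - i) mod length H) = a # Z @ [b]"
proof -
  let ?n = "length H"
  define d where "d = (j + ?n - i) mod ?n"
  have n: "0 < ?n" using assms by auto
  have d: "d < ?n" using n by (simp add: d_def)
  have "(i + d) mod ?n = (i + (j + ?n - i)) mod ?n"
    by (simp add: d_def mod_simps)
  also have "\<dots> = j" using assms by simp
  finally have "rotate i H ! d = b" using nth_rotate[OF d, of i] assms by simp
  moreover have "rotate i H ! Suc (length Z) = b" using rot by (simp add: nth_append)
  moreover have "Suc (length Z) < ?n" using arg_cong[OF rot, of length] by simp
  ultimately have "d = Suc (length Z)"
    using d assms(1) nth_eq_iff_index_eq[of "rotate i H" d "Suc (length Z)"] by simp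
  then show ?thesis
    using cyc_seg_eq_take_rotate[OF d, of i] rot by (simp add: d_def)
qed

lemma is_section_rotated:
  assumes dist: "distinct H" and rot: "rotate k H = v # X @ u # Y" and "is_section H u v S"
  shows "S = v # X @ [u] \<or> S = u # Y @ [v]"
proof -
  let ?n = "length H"
  obtain i j where ij: "i < ?n" "j < ?n" "H ! i = u" "H ! j = v"
    and S: "S = cyc_seg H i ((j + ?n - i) mod ?n) \<or> S = cyc_seg H j ((i + ?n - j) mod ?n)"
    using assms(3) unfolding is_section_def by blast
  have ne: "H \<noteq> []" using ij by auto
  have "hd (rotate j H) = hd (rotate k H)"
    using ne ij rot by (simp add: hd_rotate_conv_nth)
  then have "rotate j H = rotate k H"
    by (rule rotate_eq_if_hd_eq[OF dist ne])
  then have from_v: "cyc_seg H j ((i + ?n - j) mod ?n) = v # X @ [u]"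
    using cyc_seg_between[OF dist ij(2,1,3)] rot by simp
  have rot_u: "rotate (Suc (length X) + k) H = u # Y @ v # X"
    using rotate_append[of "v # X" "u # Y"] rot by (simp add: rotate_rotate[symmetric])
  then have "hd (rotate i H) = hd (rotate (Suc (length X) + k) H)"
    using ne ij by (simp add: hd_rotate_conv_nth)
  then have "rotate i H = rotate (Suc (length X) + k) H"
    by (rule rotate_eq_if_hd_eq[OF dist ne])
  then have from_u: "cyc_seg H i ((j + ?n - i) mod ?n) = u # Y @ [v]"
    using cyc_seg_between[OF dist ij(1,2,4)] rot_u by simp
  show ?thesis using S from_u from_v by auto
qed

lemma internal_Cons_snoc [simp]: "internal (a # Z @ [b]) = set Z"
  by (simp add: internal_def)

section \<open>Holes cut open at two vertices\<close>

lemma hole_chord: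
  assumes "hole V E C" "i < j" "j < length C" "E (C ! i) (C ! j)"
  shows "j = Suc i \<or> (i = 0 \<and> j = length C - 1)"
proof -
  have "j = (i + 1) mod length C \<or> i = (j + 1) mod length C"
    using assms unfolding hole_def by auto
  then show ?thesis using assms(2,3) by (cases "j + 1 = length C") auto
qed

lemma hole_successively: "hole V E C \<Longrightarrow> successively E C"
  unfolding successively_conv_nth hole_def by auto

lemma hole_split_no_edge:
  assumes "hole V E (v # X @ u # Y)" "x \<in> set X" "y \<in> set Y"
  shows "\<not> E x y"
proof
  assume "E x y"
  obtain a b where "a < length X" "x = X ! a" "b < length Y" "y = Y ! b"
    using assms(2,3) by (auto simp: in_set_conv_nth)
  moreover have "(v # X @ u # Y) ! Suc a = X ! a" "(v # X @ u # Y) ! Suc (length X + Suc b) = Y ! b"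
    using \<open>a < length X\<close> by (simp_all add: nth_append)
  ultimately show False
    using hole_chord[OF assms(1), of "Suc a" "Suc (length X + Suc b)"] \<open>E x y\<close> by auto
qed

lemma hole_split_apex_neighbour:
  assumes "hole V E (v # X @ u # Y)" "w \<in> set X \<union> set Y" "E v w"
  shows "w = hd X \<or> w = last Y"
  using assms(2)
proof
  assume "w \<in> set X"
  then obtain a where a: "a < length X" "w = X ! a" by (auto simp: in_set_conv_nth)
  then have "(v # X @ u # Y) ! Suc a = w" by (simp add: nth_append)
  then have "a = 0"
    using hole_chord[OF assms(1), of 0 "Suc a"] a assms(3) by auto
  then show ?thesis using a by (simp add: hd_conv_nth)
next
  assume "w \<in> set Y"
  then obtain b where b: "b < length Y" "w = Y ! b" by (auto simp: in_set_conv_nth)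
  then have "(v # X @ u # Y) ! Suc (length X + Suc b) = w" by (simp add: nth_append)
  then have "b = length Y - 1"
    using hole_chord[OF assms(1), of 0 "Suc (length X + Suc b)"] b assms(3) by auto
  moreover have "Y \<noteq> []" using b by auto
  ultimately show ?thesis using b by (simp add: last_conv_nth)
qed

lemma hole_split_apex_adjacent:
  assumes "hole V E (v # X @ u # Y)" "X \<noteq> []" "Y \<noteq> []"
  shows "E v (hd X)" "E v (last Y)"
proof -
  let ?C = "v # X @ u # Y"
  have adj: "E (?C ! i) (?C ! j) \<longleftrightarrow> j = (i + 1) mod length ?C \<or> i = (j + 1) mod length ?C"
    if "i < length ?C" "j < length ?C" for i j
    using assms(1) that unfolding hole_def by blast
  show "E v (hd X)"
    using adj[of 0 1] assms(2) by (simp add: hd_conv_nth nth_append)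
  show "E v (last Y)"
    using adj[of 0 "Suc (length X + length Y)"] assms(3)
    by (simp add: last_conv_nth nth_append)
qed

section \<open>Connectivity and shortest walks in induced subgraphs\<close>

definition reachable_in :: "('a \<Rightarrow> 'a \<Rightarrow> bool) \<Rightarrow> 'a set \<Rightarrow> 'a \<Rightarrow> 'a \<Rightarrow> bool" where
  "reachable_in E W = (\<lambda>x y. E x y \<and> x \<in> W \<and> y \<in> W)\<^sup>*\<^sup>*"

lemma reachable_in_refl [simp]: "reachable_in E W x x"
  by (simp add: reachable_in_def)

lemma reachable_in_edge: "E x y \<Longrightarrow> x \<in> W \<Longrightarrow> y \<in> W \<Longrightarrow> reachable_in E W x y"
  by (simp add: reachable_in_def r_into_rtranclp)

lemma reachable_in_trans: "reachable_in E W x y \<Longrightarrow> reachable_in E W y z \<Longrightarrow> reachable_in E W x z"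
  unfolding reachable_in_def by (rule rtranclp_trans)

lemma reachable_in_sym:
  assumes "graph V E" "reachable_in E W x y"
  shows "reachable_in E W y x"
  using assms(2) unfolding reachable_in_def
proof (induction rule: rtranclp_induct)
  case (step y z)
  then show ?case
    using assms(1) unfolding graph_def by (auto intro: converse_rtranclp_into_rtranclp)
qed simp

lemma successively_reachable_in_hd:
  "successively E xs \<Longrightarrow> set xs \<subseteq> W \<Longrightarrow> y \<in> set xs \<Longrightarrow> reachable_in E W (hd xs) y"
proof (induction xs)
  case (Cons x xs)
  show ?case
  proof (cases "y = x")
    case False
    then have ne: "xs \<noteq> []" using Cons.prems(3) by auto
    then have "E x (hd xs)" "successively E xs"
      using Cons.prems(1) by (simp_all add: successively_Cons)
    moreover have "hd xs \<in> W" "x \<in> W" "set xs \<subseteq> W" "y \<in> set xs"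
      using Cons.prems ne False by auto
    ultimately have "reachable_in E W x (hd xs)" "reachable_in E W (hd xs) y"
      using Cons.IH by (simp_all add: reachable_in_edge)
    then show ?thesis
      using reachable_in_trans by fastforce
  qed simp
qed simp

lemma successively_reachable_in:
  assumes "graph V E" "successively E xs" "set xs \<subseteq> W" "x \<in> set xs" "y \<in> set xs"
  shows "reachable_in E W x y"
  using successively_reachable_in_hd[OF assms(2,3)] assms(4,5)
    reachable_in_sym[OF assms(1)] reachable_in_trans by metis

lemma induced_path_successively: "induced_path V E P \<Longrightarrow> successively E P"
  unfolding successively_conv_nth induced_path_def by auto

definition walk_in :: "('a \<Rightarrow> 'a \<Rightarrow> bool) \<Rightarrow> 'a set \<Rightarrow> 'a \<Rightarrow> 'a \<Rightarrow> 'a list \<Rightarrow> bool" where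
  "walk_in E W x y R \<longleftrightarrow> R \<noteq> [] \<and> hd R = x \<and> last R = y \<and> set R \<subseteq> W \<and> successively E R"

lemma reachable_in_walk_in:
  assumes "reachable_in E W x y" "x \<in> W"
  shows "\<exists>R. walk_in E W x y R"
  using assms(1) unfolding reachable_in_def
proof (induction rule: rtranclp_induct)
  case base
  show ?case using assms(2) by (intro exI[of _ "[x]"]) (simp add: walk_in_def)
next
  case (step y z)
  then obtain R where "walk_in E W x y R" by blast
  then show ?case
    using step by (intro exI[of _ "R @ [z]"]) (auto simp: walk_in_def successively_append_iff)
qed

lemma successively_take: "successively P xs \<Longrightarrow> successively P (take k xs)"
  by (metis append_take_drop_id successively_append_iff)

lemma successively_drop: "successively P xs \<Longrightarrow> successively P (drop k xs)"
  by (metis append_take_drop_id successively_append_iff)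

lemma walk_in_shortcut:
  assumes walk: "walk_in E W x y R" and ij: "0 < i" "i \<le> j" "j < length R"
    and chord: "E (R ! (i - 1)) (R ! j)"
  shows "walk_in E W x y (take i R @ drop j R)"
proof -
  have ne: "take i R \<noteq> []" and hd: "hd (take i R) = x"
    using walk ij by (cases R; auto simp: walk_in_def)+
  have "last (take i R) = R ! (i - 1)"
    using last_conv_nth[OF ne] ij by simp
  moreover have "drop j R \<noteq> []" "hd (drop j R) = R ! j" "last (drop j R) = y"
    using walk ij by (simp_all add: walk_in_def hd_drop_conv_nth)
  moreover have "set (take i R @ drop j R) \<subseteq> W"
    using walk by (auto simp: walk_in_def dest: in_set_takeD in_set_dropD)
  moreover have "successively E (take i R)" "successively E (drop j R)"
    using walk by (simp_all add: walk_in_def successively_take successively_drop)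
  ultimately show ?thesis
    using ne hd chord by (simp add: walk_in_def successively_append_iff)
qed

lemma shortest_walk_in_distinct:
  assumes walk: "walk_in E W x y R"
    and shortest: "\<And>R'. walk_in E W x y R' \<Longrightarrow> length R \<le> length R'"
  shows "distinct R"
proof (rule ccontr)
  assume "\<not> distinct R"
  then obtain i j where ij: "i < j" "j < length R" "R ! i = R ! j"
    by (metis distinct_conv_nth linorder_neqE_nat)
  show False
  proof (cases "i = 0")
    case True
    then have "walk_in E W x y (drop j R)"
      using walk ij by (auto simp: walk_in_def successively_drop hd_drop_conv_nth hd_conv_nth
          dest: in_set_dropD)
    then show False using shortest[of "drop j R"] ij by simp
  next
    case False
    then have "E (R ! (i - 1)) (R ! j)"
      using walk ij successively_nth[of E R "i - 1"] by (simp add: walk_in_def)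
    then have "walk_in E W x y (take i R @ drop j R)"
      using walk_in_shortcut[OF walk] False ij by simp
    then show False using shortest[of "take i R @ drop j R"] ij by simp
  qed
qed

lemma shortest_walk_in_chordless:
  assumes walk: "walk_in E W x y R"
    and shortest: "\<And>R'. walk_in E W x y R' \<Longrightarrow> length R \<le> length R'"
    and "Suc i < j" "j < length R"
  shows "\<not> E (R ! i) (R ! j)"
proof
  assume "E (R ! i) (R ! j)"
  then have "walk_in E W x y (take (Suc i) R @ drop j R)"
    using walk_in_shortcut[OF walk, of "Suc i" j] assms(3,4) by simp
  then show False using shortest[of "take (Suc i) R @ drop j R"] assms(3,4) by simp
qed

lemma shortest_walk_in_induced_path:
  assumes "graph V E" and walk: "walk_in E W x y R"
    and shortest: "\<And>R'. walk_in E W x y R' \<Longrightarrow> length R \<le> length R'"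
  shows "induced_path W E R"
proof -
  have sym: "\<And>a b. E a b \<Longrightarrow> E b a" and irr: "\<And>a. \<not> E a a"
    using assms(1) by (auto simp: graph_def)
  have "E (R ! i) (R ! j) \<longleftrightarrow> i + 1 = j \<or> j + 1 = i"
    if "i < length R" "j < length R" for i j
  proof
    assume "i + 1 = j \<or> j + 1 = i"
    then show "E (R ! i) (R ! j)"
      using walk that successively_nth[of E R] sym by (auto simp: walk_in_def)
  next
    assume e: "E (R ! i) (R ! j)"
    then have "i \<noteq> j" using irr by auto
    then consider "Suc i < j" | "Suc j < i" | "i + 1 = j \<or> j + 1 = i" by linarith
    then show "i + 1 = j \<or> j + 1 = i"
      using shortest_walk_in_chordless[OF walk shortest] e sym that by cases blast+
  qed
  then show ?thesis
    using walk shortest_walk_in_distinct[OF walk shortest] by (auto simp: induced_path_def walk_in_def)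
qed

lemma reachable_in_induced_path:
  assumes "graph V E" "reachable_in E W x y" "x \<in> W"
  obtains R where "induced_path W E R" "hd R = x" "last R = y"
proof -
  obtain R0 where "walk_in E W x y R0" using reachable_in_walk_in[OF assms(2,3)] by blast
  then obtain R where R: "walk_in E W x y R"
    and "\<And>R'. walk_in E W x y R' \<Longrightarrow> length R \<le> length R'"
    using ex_has_least_nat[of "walk_in E W x y" R0 length] by blast
  then have "induced_path W E R" using shortest_walk_in_induced_path[OF assms(1)] by blast
  then show thesis using that R by (simp add: walk_in_def)
qed

section \<open>Closing an induced path into a hole\<close>

lemma cycle_adjacent_Cons_index:
  assumes "0 < L" "i < Suc L" "j < Suc L"
  shows "(j = (i + 1) mod Suc L \<or> i = (j + 1) mod Suc L) \<longleftrightarrow>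
    (case (i, j) of
      (0, 0) \<Rightarrow> False
    | (0, Suc j') \<Rightarrow> j' = 0 \<or> j' = L - 1
    | (Suc i', 0) \<Rightarrow> i' = 0 \<or> i' = L - 1
    | (Suc i', Suc j') \<Rightarrow> i' + 1 = j' \<or> j' + 1 = i')"
proof -
  have succ: "(k + 1) mod Suc L = (if k = L then 0 else Suc k)" if "k < Suc L" for k
    using that by auto
  show ?thesis
    using assms succ[OF assms(2)] succ[OF assms(3)] by (cases i; cases j) auto
qed

lemma hole_Cons_induced_path:
  assumes "graph V E" and R: "induced_path V E R" and len: "3 \<le> length R"
    and "v \<in> V" "v \<notin> set R"
    and apex: "\<And>w. w \<in> set R \<Longrightarrow> E v w \<longleftrightarrow> w = hd R \<or> w = last R"
  shows "hole V E (v # R)"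
proof -
  let ?C = "v # R" and ?L = "length R"
  have sym: "E a b \<longleftrightarrow> E b a" for a b
    using assms(1) unfolding graph_def by blast
  have irr: "\<not> E a a" for a
    using assms(1) unfolding graph_def by blast
  have adjR: "E (R ! i) (R ! j) \<longleftrightarrow> i + 1 = j \<or> j + 1 = i" if "i < ?L" "j < ?L" for i j
    using R that by (simp add: induced_path_def)
  have ne: "R \<noteq> []" using len by auto
  have apex_nth: "E v (R ! k) \<longleftrightarrow> k = 0 \<or> k = ?L - 1" if "k < ?L" for k
  proof -
    have "distinct R" using R by (simp add: induced_path_def)
    then have "R ! k = hd R \<longleftrightarrow> k = 0" "R ! k = last R \<longleftrightarrow> k = ?L - 1"
      using that ne by (simp_all add: hd_conv_nth last_conv_nth nth_eq_iff_index_eq)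
    then show ?thesis using apex[of "R ! k"] that by simp
  qed
  have "E (?C ! i) (?C ! j) \<longleftrightarrow> j = (i + 1) mod length ?C \<or> i = (j + 1) mod length ?C"
    if "i < length ?C" "j < length ?C" for i j
    using that len cycle_adjacent_Cons_index[of ?L i j] ne
    by (cases i; cases j) (simp_all add: irr apex_nth adjR sym[of _ v])
  moreover have "4 \<le> length ?C" "distinct ?C" "set ?C \<subseteq> V"
    using assms len unfolding induced_path_def by simp_all
  ultimately show ?thesis
    unfolding hole_def by blast
qed

lemma cycle_edges_Cons_hd_last:
  assumes "R \<noteq> []"
  shows "{v, hd R} \<in> cycle_edges (v # R)" "{last R, v} \<in> cycle_edges (v # R)"
proof -
  show "{v, hd R} \<in> cycle_edges (v # R)" unfolding cycle_edges_def
    using assms by (intro CollectI exI[of _ 0]) (auto simp: hd_conv_nth)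
  have "(v # R) ! length R = last R" using assms by (simp add: last_conv_nth nth_Cons')
  then show "{last R, v} \<in> cycle_edges (v # R)" unfolding cycle_edges_def
    by (intro CollectI exI[of _ "length R"]) auto
qed

lemma cycle_edges_Cons_at_hd:
  assumes "distinct (v # R)" "R \<noteq> []" "e \<in> cycle_edges (v # R)" "v \<in> e"
  shows "e = {v, hd R} \<or> e = {last R, v}"
proof -
  let ?C = "v # R"
  obtain i where i: "i < length ?C" and e: "e = {?C ! i, ?C ! ((i + 1) mod length ?C)}"
    using assms(3) unfolding cycle_edges_def by blast
  show ?thesis
  proof (cases "i = length R")
    case True
    then show ?thesis using e assms(2) by (auto simp: last_conv_nth)
  next
    case False
    then have "(i + 1) mod length ?C = Suc i" "i < length R" using i by auto
    moreover have "?C ! Suc i \<noteq> v" using \<open>i < length R\<close> assms(1) by auto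
    ultimately have "?C ! i = v" using e assms(4) by auto
    then have "i = 0" using assms(1) \<open>i < length R\<close> by (cases i) auto
    then show ?thesis using e \<open>(i + 1) mod length ?C = Suc i\<close> assms(2) by (simp add: hd_conv_nth)
  qed
qed

lemma cycle_edges_Cons_at_hd_subset:
  assumes "distinct (v # Z)" "Z \<noteq> []" "R \<noteq> []" "hd R = hd Z" "last R = last Z"
  shows "{e \<in> cycle_edges (v # Z). v \<in> e} \<subseteq> cycle_edges (v # R)"
  using cycle_edges_Cons_at_hd[OF assms(1,2)] cycle_edges_Cons_hd_last[OF assms(3)] assms(4,5)
  by auto

lemma successively_stays_in:
  assumes "successively E xs" "set xs \<subseteq> A \<union> B" "\<And>a b. a \<in> A \<Longrightarrow> b \<in> B \<Longrightarrow> \<not> E a b"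
    "xs \<noteq> []" "hd xs \<in> A"
  shows "set xs \<subseteq> A"
  using assms(1,2,4,5)
proof (induction xs rule: induct_list012)
  case (3 x y zs)
  have "E x y" "x \<in> A" "y \<in> A \<union> B"
    using "3.prems" by simp_all
  then have "y \<in> A" using assms(3) by blast
  then have "set (y # zs) \<subseteq> A"
    using "3.IH"(2) "3.prems"(1,2) by simp
  then show ?case using \<open>x \<in> A\<close> by simp
qed simp_all

lemma induced_path_length_ge_3:
  assumes "induced_path V E R" "hd R \<noteq> last R" "\<not> E (hd R) (last R)"
  shows "3 \<le> length R"
proof (rule ccontr)
  assume "\<not> 3 \<le> length R"
  moreover have "R \<noteq> []" using assms(1) by (simp add: induced_path_def)
  moreover have "0 < length R" using calculation(2) by simp
  ultimately have "length R = 1 \<or> length R = 2" by linarith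
  then show False
  proof
    assume 1: "length R = 1"
    then show False using assms(2) by (simp add: hd_conv_nth last_conv_nth \<open>R \<noteq> []\<close>)
  next
    assume 2: "length R = 2"
    then have "E (R ! 0) (R ! 1)" using assms(1) by (simp add: induced_path_def)
    then show False using assms(3) 2 \<open>R \<noteq> []\<close> by (simp add: hd_conv_nth last_conv_nth)
  qed
qed

lemma induced_path_mono: "induced_path W E R \<Longrightarrow> W \<subseteq> V \<Longrightarrow> induced_path V E R"
  unfolding induced_path_def by (meson order_trans)

section \<open>Rerouting a hole through a path\<close>

lemma hole_rotate_split:
  assumes "hole V E H" "u \<in> set H" "v \<in> set H" "u \<noteq> v"
  obtains X Y where "hole V E (v # X @ u # Y)" "set (v # X @ u # Y) = set H"
    "cycle_edges H \<subseteq> cycle_edges (v # X @ u # Y)"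
    "\<And>S. is_section H u v S \<Longrightarrow> S = v # X @ [u] \<or> S = u # Y @ [v]"
proof -
  obtain ws k l where rot: "rotate k H = v # ws" and unrot: "rotate l (v # ws) = H"
    using rotate_to_front[OF assms(3)] .
  have "u \<in> set ws" using assms(2,4) arg_cong[OF rot, of set] by simp
  then obtain X Y where ws: "ws = X @ u # Y" by (meson split_list)
  have "hole V E (v # X @ u # Y)" using hole_rotate[OF assms(1), of k] rot ws by simp
  moreover have "set (v # X @ u # Y) = set H" using arg_cong[OF rot, of set] ws by simp
  moreover have "cycle_edges H \<subseteq> cycle_edges (v # X @ u # Y)"
    using cycle_edges_rotate_subset[of l "v # ws"] unrot ws by simp
  moreover have "distinct H" using assms(1) by (simp add: hole_def)
  ultimately show thesis
    using that is_section_rotated[of H k v X u Y] rot ws by blast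
qed

lemma hole_split_reachable_through_path:
  assumes "graph V E" "hole V E (v # X @ u # Y)" "induced_path V E P"
    and "a \<in> set X" "b \<in> set Y" "p \<in> set P" "q \<in> set P" "E a p" "E b q"
  shows "reachable_in E (set X \<union> set Y \<union> set P) (hd X) (last Y)"
proof -
  let ?W = "set X \<union> set Y \<union> set P"
  have "successively E (v # X @ u # Y)" using assms(2) by (rule hole_successively)
  then have sX: "successively E X" and sY: "successively E Y"
    by (auto simp: successively_append_iff successively_Cons)
  have "X \<noteq> []" "Y \<noteq> []" using assms(4,5) by auto
  then have "hd X \<in> set X" "last Y \<in> set Y" by simp_all
  then have "reachable_in E ?W (hd X) a" "reachable_in E ?W b (last Y)"
    using successively_reachable_in[OF assms(1) sX, of ?W]
      successively_reachable_in[OF assms(1) sY, of ?W] assms(4,5) by auto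
  moreover have "reachable_in E ?W p q"
    using successively_reachable_in[OF assms(1) induced_path_successively[OF assms(3)]] assms(6,7)
    by auto
  moreover have "E q b" using assms(1,9) unfolding graph_def by blast
  then have "reachable_in E ?W a p" "reachable_in E ?W q b"
    using assms(4-8) by (simp_all add: reachable_in_edge)
  ultimately show ?thesis
    by (meson reachable_in_trans)
qed

lemma hole_detour_through_path:
  assumes "graph V E" and C: "hole V E (v # X @ u # Y)" and P: "induced_path V E P"
    and "u \<notin> set P" "v \<notin> set P" "\<forall>p \<in> set P. \<not> E v p"
    and "a \<in> set X" "b \<in> set Y" "p \<in> set P" "q \<in> set P" "E a p" "E b q"
  obtains R where "hole V E (v # R)" "u \<notin> set R" "hd R = hd X" "last R = last Y"
    "\<exists>x \<in> set P. x \<notin> set X \<union> set Y \<and> x \<in> set R"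
proof -
  define W where "W = set X \<union> set Y \<union> set P"
  have dist: "distinct (v # X @ u # Y)" and "set (v # X @ u # Y) \<subseteq> V" and "set P \<subseteq> V"
    using C P by (simp_all add: hole_def induced_path_def)
  then have WV: "W \<subseteq> V" and vW: "v \<notin> W" and uW: "u \<notin> W" and "v \<in> V"
    using assms(4,5) by (auto simp: W_def)
  have XY: "X \<noteq> []" "Y \<noteq> []" using assms(7,8) by auto
  obtain R where R: "induced_path W E R" "hd R = hd X" "last R = last Y"
    using reachable_in_induced_path[OF assms(1) hole_split_reachable_through_path[OF assms(1) C P
        assms(7-12)]] XY unfolding W_def by auto
  have RW: "set R \<subseteq> W" using R(1) by (simp add: induced_path_def)
  have RV: "induced_path V E R" using induced_path_mono[OF R(1) WV] .
  have "hd X \<in> set X" "last Y \<in> set Y" using XY by simp_all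
  then have "hd X \<noteq> last Y" "\<not> E (hd X) (last Y)"
    using dist hole_split_no_edge[OF C] by auto
  then have len: "3 \<le> length R" using induced_path_length_ge_3[OF RV] R by simp
  have apex: "E v w \<longleftrightarrow> w = hd R \<or> w = last R" if "w \<in> set R" for w
  proof -
    have "E v w \<Longrightarrow> w \<in> set X \<union> set Y" using that RW assms(6) unfolding W_def by auto
    then show ?thesis
      using hole_split_apex_neighbour[OF C, of w] hole_split_apex_adjacent[OF C XY] R(2,3) by auto
  qed
  have "v \<notin> set R" using vW RW by blast
  then have "hole V E (v # R)"
    using hole_Cons_induced_path[OF assms(1) RV len \<open>v \<in> V\<close> _ apex] by blast
  moreover have "\<exists>x \<in> set P. x \<notin> set X \<union> set Y \<and> x \<in> set R"
  proof (rule ccontr)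
    assume "\<not> ?thesis"
    then have "set R \<subseteq> set X \<union> set Y" using RW unfolding W_def by auto
    moreover have "R \<noteq> []" using RV by (simp add: induced_path_def)
    ultimately have "set R \<subseteq> set X"
      using successively_stays_in[OF induced_path_successively[OF R(1)] _ hole_split_no_edge[OF C]]
        R(2) \<open>hd X \<in> set X\<close> by simp
    then have "last Y \<in> set X" using R(3) \<open>R \<noteq> []\<close> last_in_set by fastforce
    then show False using \<open>last Y \<in> set Y\<close> dist by auto
  qed
  ultimately show thesis
    using that R uW RW by blast
qed

theorem lemma2p2:
  fixes V :: "'a set" and E :: "'a \<Rightarrow> 'a \<Rightarrow> bool" and H P :: "'a list" and u v :: 'a
  assumes "graph V E"
    and "hole V E H"
    and "induced_path V E P"
    and "u \<in> set H" and "v \<in> set H" and "u \<noteq> v" and "\<not> E u v"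
    and "u \<notin> set P" and "v \<notin> set P"
    and "\<forall>p \<in> set P. \<not> E v p"
    and "\<exists>S1 S2 a b. is_section H u v S1 \<and> is_section H u v S2 \<and> S1 \<noteq> S2
            \<and> a \<in> internal S1 \<and> b \<in> internal S2
            \<and> (\<exists>p \<in> set P. E a p) \<and> (\<exists>q \<in> set P. E b q)"
  shows "\<exists>C. hole V E C \<and> u \<notin> set C
            \<and> {e \<in> cycle_edges H. v \<in> e} \<subseteq> cycle_edges C
            \<and> (\<exists>x \<in> set P. x \<notin> set H \<and> x \<in> set C)"
proof -
  obtain X Y where C: "hole V E (v # X @ u # Y)" and setC: "set (v # X @ u # Y) = set H"
    and edgesC: "cycle_edges H \<subseteq> cycle_edges (v # X @ u # Y)"
    and sections: "\<And>S. is_section H u v S \<Longrightarrow> S = v # X @ [u] \<or> S = u # Y @ [v]"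
    using hole_rotate_split[OF assms(2,4,5,6)] by blast
  obtain S1 S2 c d where S: "is_section H u v S1" "is_section H u v S2" "S1 \<noteq> S2"
    "c \<in> internal S1" "d \<in> internal S2" "\<exists>p \<in> set P. E c p" "\<exists>q \<in> set P. E d q"
    using assms(11) by blast
  then have "internal S1 = set X \<and> internal S2 = set Y \<or> internal S1 = set Y \<and> internal S2 = set X"
    using sections[OF S(1)] sections[OF S(2)] by auto
  then obtain a b p q where "a \<in> set X" "b \<in> set Y" "p \<in> set P" "q \<in> set P" "E a p" "E b q"
    using S(4-7) by blast
  then obtain R where R: "hole V E (v # R)" "u \<notin> set R" "hd R = hd X" "last R = last Y"
    and new: "\<exists>x \<in> set P. x \<notin> set X \<union> set Y \<and> x \<in> set R"
    using hole_detour_through_path[OF assms(1) C assms(3,8-10)] by blast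
  have "distinct (v # X @ u # Y)" "R \<noteq> []" "X \<noteq> []" "Y \<noteq> []"
    using C R(1) \<open>a \<in> set X\<close> \<open>b \<in> set Y\<close> by (auto simp: hole_def)
  then have "{e \<in> cycle_edges H. v \<in> e} \<subseteq> cycle_edges (v # R)"
    using cycle_edges_Cons_at_hd_subset[of v "X @ u # Y" R] edgesC R(3,4) by auto
  moreover have "\<exists>x \<in> set P. x \<notin> set H \<and> x \<in> set (v # R)"
    using new setC assms(8,9) by auto
  moreover have "u \<notin> set (v # R)" using R(2) assms(6) by simp
  ultimately show ?thesis
    using R(1) by blast
qed

end
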